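(* Let $\nu$ be a probability distribution on $(0,1)$ whose c.d.f. $F(t)=\int_0^t\nu(\mathrm du)$ belongs to $\mathcal C^\gamma$ for some $\gamma\in(0,2]$. For any integer $M\ge0$, \[ \max_{0\le l\le M+1}\left|F\!\left(\tfrac{l}{M+1}\right)-F^M\!\left(\tfrac{l}{M+1}\right)\right|\le\frac{\|F\|_\gamma}{2^\gamma(M+2)^{\gamma/2}}. \]
   Context: $m^{\alpha,\beta}=\int_0^1a^\alpha(1-a)^\beta\nu(\mathrm da)$ for $\alpha,\beta\in\mathbb Z_+$, and for $u\in[0,1]$, $F^M(u)=\sum_{k=0}^{[(M+1)u]-1}\binom Mk m^{k,M-k}$, where $[\cdot]$ is the integer part and the empty sum is $0$. Hölder spaces: for $\gamma\in(0,1]$, $\mathcal C^\gamma$ is the set of continuous $f:[0,1]\to\mathbb R$ with $\|f\|_\gamma=\sup_{u\ne v}|f(v)-f(u)|/|v-u|^\gamma<\infty$; for $\gamma\in(1,2]$, $\mathcal C^\gamma$ is the set of continuously differentiable $f:[0,1]\to\mathbb R$ with $\|f\|_\gamma=\|f'\|_\infty+\sup_{u\ne v}|f'(v)-f'(u)|/|v-u|^{\gamma-1}<\infty$. *)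

theory Defs
  imports "HOL-Probability.Probability"
begin

definition unit_pairs :: "(real \<times> real) set" where
  "unit_pairs = {(u, v). u \<in> {0..1} \<and> v \<in> {0..1} \<and> u \<noteq> v}"

definition holder_semi :: "real \<Rightarrow> (real \<Rightarrow> real) \<Rightarrow> real" where
  "holder_semi a g = (SUP (u, v)\<in>unit_pairs. \<bar>g v - g u\<bar> / \<bar>v - u\<bar> powr a)"

definition holder_bdd :: "real \<Rightarrow> (real \<Rightarrow> real) \<Rightarrow> bool" where
  "holder_bdd a g \<longleftrightarrow> bdd_above ((\<lambda>(u, v). \<bar>g v - g u\<bar> / \<bar>v - u\<bar> powr a) ` unit_pairs)"

definition C1_on_unit :: "(real \<Rightarrow> real) \<Rightarrow> (real \<Rightarrow> real) \<Rightarrow> bool" where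
  "C1_on_unit f f' \<longleftrightarrow>
     (\<forall>x\<in>{0..1}. (f has_real_derivative f' x) (at x within {0..1})) \<and> continuous_on {0..1} f'"

definition holder_space :: "real \<Rightarrow> (real \<Rightarrow> real) \<Rightarrow> bool" where
  "holder_space \<gamma> f \<longleftrightarrow>
     (if \<gamma> \<le> 1 then continuous_on {0..1} f \<and> holder_bdd \<gamma> f
      else (\<exists>f'. C1_on_unit f f' \<and> holder_bdd (\<gamma> - 1) f'))"

text \<open>The Hoelder norm; for gamma > 1 the derivative on [0,1] is unique, chosen by SOME.\<close>
definition holder_norm :: "real \<Rightarrow> (real \<Rightarrow> real) \<Rightarrow> real" where
  "holder_norm \<gamma> f =
     (if \<gamma> \<le> 1 then holder_semi \<gamma> f
      else (let f' = (SOME f'. C1_on_unit f f')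
            in (SUP x\<in>{0..1}. \<bar>f' x\<bar>) + holder_semi (\<gamma> - 1) f'))"

text \<open>c.d.f. F(t) = nu((-inf,t]) (= nu((0,t]) since nu lives on (0,1)).\<close>
definition cdf_of :: "real measure \<Rightarrow> real \<Rightarrow> real" where
  "cdf_of \<nu> t = measure \<nu> {..t}"

definition mom :: "real measure \<Rightarrow> nat \<Rightarrow> nat \<Rightarrow> real" where
  "mom \<nu> \<alpha> \<beta> = (\<integral>a. a ^ \<alpha> * (1 - a) ^ \<beta> \<partial>\<nu>)"

definition FM :: "real measure \<Rightarrow> nat \<Rightarrow> real \<Rightarrow> real" where
  "FM \<nu> M u = (\<Sum>k<nat \<lfloor>(real M + 1) * u\<rfloor>. real (M choose k) * mom \<nu> k (M - k))"

end

theory Submission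
  imports Defs
begin

text \<open>Given \<open>a \<sim> \<nu>\<close>, \<open>F\<^sup>M(l/(M+1))\<close> is the probability that a Binomial\<open>(M, a)\<close> variable is
  below \<open>l\<close>. Differentiating this binomial tail in \<open>a\<close> gives minus the Beta\<open>(l, M+1-l)\<close> density
  \<open>\<beta>\<close>, so Fubini turns \<open>F\<^sup>M(t)\<close>, \<open>t = l/(M+1)\<close>, into \<open>\<integral>\<^sub>0\<^sup>1 \<beta>(u) F(u) du\<close>. Since \<open>\<beta>\<close> has
  mass 1 and mean \<open>t\<close>, \<open>F(t) - F\<^sup>M(t)\<close> is the integral of \<open>\<beta>\<close> against the remainder
  \<open>F(u) - F(t) - c (u - t)\<close> for any slope \<open>c\<close>; with \<open>c = 0\<close> for \<open>\<gamma> \<le> 1\<close> and \<open>c = F'(t)\<close> otherwise,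
  the remainder is at most \<open>\<parallel>F\<parallel>\<^sub>\<gamma> |u - t|\<^sup>\<gamma>\<close>. Finally concavity of \<open>y \<mapsto> y\<^sup>\<gamma>\<^sup>/\<^sup>2\<close> bounds
  \<open>\<integral> \<beta>(u) |u - t|\<^sup>\<gamma> du\<close> by the variance of \<open>\<beta>\<close>, at most \<open>1/(4(M+2))\<close>, to the power \<open>\<gamma>/2\<close>.\<close>

lemma holder_semi_bound:
  assumes "holder_bdd a g" "u \<in> {0..1}" "v \<in> {0..1}"
  shows "\<bar>g v - g u\<bar> \<le> holder_semi a g * \<bar>v - u\<bar> powr a"
proof (cases "u = v")
  case False
  have "(u, v) \<in> unit_pairs"
    using assms False by (simp add: unit_pairs_def)
  then have "(\<lambda>(u, v). \<bar>g v - g u\<bar> / \<bar>v - u\<bar> powr a) (u, v) \<le> holder_semi a g"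
    using assms(1) unfolding holder_semi_def holder_bdd_def by (rule cSUP_upper)
  then show ?thesis
    using False by (simp add: divide_le_eq)
qed simp

lemma holder_semi_nonneg: "holder_bdd a g \<Longrightarrow> 0 \<le> holder_semi a g"
  using holder_semi_bound[of a g 0 1] by (simp add: order.trans[OF abs_ge_zero])

lemma C1_on_unit_deriv_unique:
  assumes "C1_on_unit f f'" "C1_on_unit f g'" "x \<in> {0..1}"
  shows "f' x = g' x"
  using assms unfolding C1_on_unit_def
  by (intro vector_derivative_unique_within_closed_interval[of 0 1 x f])
    (auto simp: has_real_derivative_iff_has_vector_derivative)

lemma holder_space_SOME_deriv:
  assumes "holder_space \<gamma> f" "1 < \<gamma>"
  defines "f' \<equiv> SOME f'. C1_on_unit f f'"
  shows "C1_on_unit f f'" "holder_bdd (\<gamma> - 1) f'"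
proof -
  obtain g' where g': "C1_on_unit f g'" "holder_bdd (\<gamma> - 1) g'"
    using assms by (auto simp: holder_space_def)
  show C1: "C1_on_unit f f'"
    unfolding f'_def by (rule someI[where P="C1_on_unit f", OF g'(1)])
  have "(\<lambda>(u, v). \<bar>f' v - f' u\<bar> / \<bar>v - u\<bar> powr (\<gamma> - 1)) ` unit_pairs
      = (\<lambda>(u, v). \<bar>g' v - g' u\<bar> / \<bar>v - u\<bar> powr (\<gamma> - 1)) ` unit_pairs"
    using C1_on_unit_deriv_unique[OF C1 g'(1)] by (intro image_cong) (auto simp: unit_pairs_def)
  then show "holder_bdd (\<gamma> - 1) f'"
    using g'(2) by (simp add: holder_bdd_def)
qed

lemma holder_space_continuous: "holder_space \<gamma> f \<Longrightarrow> continuous_on {0..1} f"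
  unfolding holder_space_def C1_on_unit_def continuous_on_eq_continuous_within
  by (auto split: if_splits dest: DERIV_continuous)

lemma holder_deriv_remainder_bound:
  fixes F D :: "real \<Rightarrow> real"
  assumes D: "\<And>x. x \<in> {0..1} \<Longrightarrow> (F has_real_derivative D x) (at x within {0..1})"
    and "holder_bdd a D" "0 \<le> a" and u: "u \<in> {0..1}" and t: "t \<in> {0..1}"
  shows "\<bar>F u - F t - D t * (u - t)\<bar> \<le> holder_semi a D * \<bar>u - t\<bar> powr (1 + a)"
proof -
  have mvt: "\<exists>\<xi>\<in>closed_segment x y. F y - F x = D \<xi> * (y - x)"
    if "x \<in> {0..1}" "y \<in> {0..1}" "x \<le> y" for x y
  proof -
    have "(F has_derivative (*) (D \<xi>)) (at \<xi> within {x..y})" if "x \<le> \<xi>" "\<xi> \<le> y" for \<xi>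
      using D[of \<xi>] \<open>x \<in> {0..1}\<close> \<open>y \<in> {0..1}\<close> that
      by (auto simp: has_field_derivative_def intro: has_derivative_subset)
    from mvt_very_simple[OF \<open>x \<le> y\<close> this] show ?thesis
      using \<open>x \<le> y\<close> by (simp add: closed_segment_eq_real_ivl1)
  qed
  obtain \<xi> where \<xi>: "\<xi> \<in> closed_segment t u" "F u - F t = D \<xi> * (u - t)"
  proof (cases "t \<le> u")
    case True
    then show ?thesis using mvt[OF t u] that by blast
  next
    case False
    then obtain \<xi> where "\<xi> \<in> closed_segment u t" "F t - F u = D \<xi> * (t - u)"
      using mvt[OF u t] by auto
    then show ?thesis
      using that[of \<xi>] by (simp add: closed_segment_commute algebra_simps)
  qed
  have \<xi>_mem: "\<xi> \<in> {0..1}" and \<xi>_dist: "\<bar>\<xi> - t\<bar> \<le> \<bar>u - t\<bar>"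
    using \<xi>(1) t u by (auto simp: closed_segment_eq_real_ivl split: if_splits)
  have "\<bar>F u - F t - D t * (u - t)\<bar> = \<bar>D \<xi> - D t\<bar> * \<bar>u - t\<bar>"
    using \<xi>(2) by (simp add: abs_mult[symmetric] algebra_simps)
  also have "\<dots> \<le> holder_semi a D * \<bar>\<xi> - t\<bar> powr a * \<bar>u - t\<bar>"
    using holder_semi_bound[OF \<open>holder_bdd a D\<close> t \<xi>_mem] by (simp add: mult_right_mono)
  also have "\<dots> \<le> holder_semi a D * \<bar>u - t\<bar> powr a * \<bar>u - t\<bar>"
    using \<xi>_dist holder_semi_nonneg[OF \<open>holder_bdd a D\<close>] \<open>0 \<le> a\<close>
    by (intro mult_right_mono mult_left_mono powr_mono2) auto
  also have "\<dots> = holder_semi a D * \<bar>u - t\<bar> powr (1 + a)"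
    by (simp add: powr_add)
  finally show ?thesis .
qed

lemma holder_space_linear_approx:
  assumes "holder_space \<gamma> F"
  obtains K where "0 \<le> K" "K \<le> holder_norm \<gamma> F"
    "\<And>t. t \<in> {0..1} \<Longrightarrow> \<exists>c. \<forall>u\<in>{0..1}. \<bar>F u - F t - c * (u - t)\<bar> \<le> K * \<bar>u - t\<bar> powr \<gamma>"
proof (cases "\<gamma> \<le> 1")
  case True
  then have hb: "holder_bdd \<gamma> F"
    using assms by (simp add: holder_space_def)
  show ?thesis
  proof (rule that[of "holder_semi \<gamma> F"])
    show "0 \<le> holder_semi \<gamma> F"
      by (rule holder_semi_nonneg[OF hb])
    show "holder_semi \<gamma> F \<le> holder_norm \<gamma> F"
      using True by (simp add: holder_norm_def)
    fix t :: real assume t: "t \<in> {0..1}"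
    show "\<exists>c. \<forall>u\<in>{0..1}. \<bar>F u - F t - c * (u - t)\<bar> \<le> holder_semi \<gamma> F * \<bar>u - t\<bar> powr \<gamma>"
      using holder_semi_bound[OF hb t] by (intro exI[of _ 0]) simp
  qed
next
  case False
  define D where "D = (SOME f'. C1_on_unit F f')"
  have C1: "C1_on_unit F D" and hb: "holder_bdd (\<gamma> - 1) D"
    using holder_space_SOME_deriv[OF assms] False unfolding D_def by auto
  have "bdd_above ((\<lambda>x. \<bar>D x\<bar>) ` {0..1})"
    using C1 unfolding C1_on_unit_def
    by (intro bounded_imp_bdd_above compact_imp_bounded compact_continuous_image continuous_on_rabs) auto
  then have sup_nonneg: "0 \<le> (SUP x\<in>{0..1}. \<bar>D x\<bar>)"
    by (rule cSUP_upper2[of _ _ 0]) auto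
  show ?thesis
  proof (rule that[of "holder_semi (\<gamma> - 1) D"])
    show "0 \<le> holder_semi (\<gamma> - 1) D"
      by (rule holder_semi_nonneg[OF hb])
    show "holder_semi (\<gamma> - 1) D \<le> holder_norm \<gamma> F"
      using False sup_nonneg by (simp add: holder_norm_def D_def Let_def)
    fix t :: real assume t: "t \<in> {0..1}"
    have "\<bar>F u - F t - D t * (u - t)\<bar> \<le> holder_semi (\<gamma> - 1) D * \<bar>u - t\<bar> powr \<gamma>"
      if "u \<in> {0..1}" for u
      using holder_deriv_remainder_bound[OF _ hb _ that t] C1 False by (simp add: C1_on_unit_def)
    then show "\<exists>c. \<forall>u\<in>{0..1}. \<bar>F u - F t - c * (u - t)\<bar> \<le> holder_semi (\<gamma> - 1) D * \<bar>u - t\<bar> powr \<gamma>"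
      by blast
  qed
qed

definition bernstein_tail :: "nat \<Rightarrow> nat \<Rightarrow> real \<Rightarrow> real" where
  "bernstein_tail M l a = (\<Sum>k<l. real (M choose k) * (a ^ k * (1 - a) ^ (M - k)))"

definition beta_density :: "nat \<Rightarrow> nat \<Rightarrow> real \<Rightarrow> real" where
  "beta_density M l u = real M * real ((M - 1) choose (l - 1)) * u ^ (l - 1) * (1 - u) ^ (M - l)"

lemma bernstein_tail_at_0: "1 \<le> l \<Longrightarrow> bernstein_tail M l 0 = 1"
  by (cases l) (auto simp: bernstein_tail_def sum.lessThan_Suc_shift)

lemma bernstein_tail_at_1: "l \<le> M \<Longrightarrow> bernstein_tail M l 1 = 0"
  by (auto simp: bernstein_tail_def intro!: sum.neutral)

lemma bernstein_tail_nonneg: "0 \<le> a \<Longrightarrow> a \<le> 1 \<Longrightarrow> 0 \<le> bernstein_tail M l a"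
  unfolding bernstein_tail_def by (intro sum_nonneg mult_nonneg_nonneg) auto

lemma beta_density_nonneg: "0 \<le> u \<Longrightarrow> u \<le> 1 \<Longrightarrow> 0 \<le> beta_density M l u"
  by (simp add: beta_density_def)

lemma continuous_on_beta_density: "continuous_on S (beta_density M l)"
  unfolding beta_density_def by (intro continuous_intros)

lemma has_real_derivative_bernstein_tail:
  assumes "1 \<le> l" "l \<le> M"
  shows "(bernstein_tail M l has_real_derivative - beta_density M l a) (at a)"
  using assms
proof (induction l rule: nat_induct_at_least)
  case base
  have "bernstein_tail M 1 = (\<lambda>a. (1 - a) ^ M)"
    by (auto simp: bernstein_tail_def)
  then show ?case
    by (auto intro!: derivative_eq_intros simp: beta_density_def)
next
  case (Suc n)
  obtain j where j: "n = Suc j" using Suc by (cases n) auto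
  obtain r where r: "M - n = Suc r" using Suc by (metis Suc_diff_Suc Suc_le_eq)
  have choose_n: "real (M choose n) * real n = real M * real ((M - 1) choose j)"
    using times_binomial_minus1_eq[of n M] j by (metis mult.commute of_nat_mult zero_less_Suc diff_Suc_1)
  have choose_r: "real (M choose n) * real (Suc r) = real M * real ((M - 1) choose n)"
    using binomial_absorb_comp[of M n] r by (metis mult.commute of_nat_mult)
  define X where "X = a ^ j * (1 - a) ^ Suc r"
  define Y where "Y = a ^ n * (1 - a) ^ r"
  have IH: "(bernstein_tail M n has_real_derivative - beta_density M n a) (at a)"
    using Suc by simp
  have tail_Suc: "bernstein_tail M (Suc n) =
      (\<lambda>a. bernstein_tail M n a + real (M choose n) * (a ^ n * (1 - a) ^ (M - n)))"
    by (simp add: fun_eq_iff bernstein_tail_def)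
  have deriv_term:
    "((\<lambda>a. a ^ n * (1 - a) ^ (M - n)) has_real_derivative real n * X - real (Suc r) * Y) (at a)"
    unfolding X_def Y_def r unfolding j by (rule derivative_eq_intros refl)+ (simp add: algebra_simps)
  txt \<open>The derivative of the \<open>n\<close>-th Bernstein term is a difference of consecutive Beta
    densities, so the derivatives telescope.\<close>
  have deriv_sum: "- beta_density M n a + real (M choose n) * (real n * X - real (Suc r) * Y)
      = - beta_density M (Suc n) a"
  proof -
    have "real (M choose n) * (real n * X - real (Suc r) * Y)
        = (real (M choose n) * real n) * X - (real (M choose n) * real (Suc r)) * Y"
      by (simp add: algebra_simps)
    moreover have "beta_density M n a = real M * real ((M - 1) choose j) * X"
      using r by (simp add: beta_density_def X_def mult.assoc) (simp add: j)
    moreover have "M - Suc n = r" using r by simp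
    then have "beta_density M (Suc n) a = real M * real ((M - 1) choose n) * Y"
      by (simp add: beta_density_def Y_def mult.assoc)
    ultimately show ?thesis
      unfolding choose_n choose_r by simp
  qed
  show ?case
    unfolding tail_Suc deriv_sum[symmetric] by (intro DERIV_add DERIV_cmult IH deriv_term)
qed

lemma beta_density_has_integral_bernstein_tail:
  assumes "1 \<le> l" "l \<le> M" "a \<le> 1"
  shows "(beta_density M l has_integral bernstein_tail M l a) {a..1}"
proof -
  have "((\<lambda>u. - beta_density M l u) has_integral bernstein_tail M l 1 - bernstein_tail M l a) {a..1}"
  proof (rule fundamental_theorem_of_calculus)
    fix x
    show "(bernstein_tail M l has_vector_derivative - beta_density M l x) (at x within {a..1})"
      unfolding has_real_derivative_iff_has_vector_derivative[symmetric]
      by (rule has_field_derivative_at_within[OF has_real_derivative_bernstein_tail[OF assms(1,2)]])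
  qed (use assms in simp)
  from has_integral_neg[OF this] show ?thesis
    using bernstein_tail_at_1[OF assms(2)] by simp
qed

lemma beta_density_has_integral_1:
  "1 \<le> l \<Longrightarrow> l \<le> M \<Longrightarrow> (beta_density M l has_integral 1) {0..1}"
  using beta_density_has_integral_bernstein_tail[of l M 0] by (simp add: bernstein_tail_at_0)

lemma mult_beta_density_Suc:
  assumes "1 \<le> l"
  shows "u * beta_density M l u = real l / (real M + 1) * beta_density (Suc M) (Suc l) u"
proof -
  have "real M * real ((M - 1) choose (l - 1)) = real l * real (M choose l)"
    using times_binomial_minus1_eq[of l M] assms by (metis of_nat_mult mult.commute not_one_le_zero neq0_conv)
  then show ?thesis
    using assms by (cases l) (simp_all add: beta_density_def field_simps)
qed

lemma beta_density_mean:
  assumes "1 \<le> l" "l \<le> M"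
  shows "((\<lambda>u. u * beta_density M l u) has_integral real l / (real M + 1)) {0..1}"
proof -
  have "((\<lambda>u. real l / (real M + 1) * beta_density (Suc M) (Suc l) u)
      has_integral real l / (real M + 1) * 1) {0..1}"
    using assms by (intro has_integral_mult_right beta_density_has_integral_1) auto
  then show ?thesis
    using assms by (simp add: mult_beta_density_Suc)
qed

lemma beta_density_second_moment:
  assumes "1 \<le> l" "l \<le> M"
  shows "((\<lambda>u. u\<^sup>2 * beta_density M l u) has_integral
    real l / (real M + 1) * ((real l + 1) / (real M + 2))) {0..1}"
proof -
  define c where "c = real l / (real M + 1) * ((real l + 1) / (real M + 2))"
  have "u\<^sup>2 * beta_density M l u = u * (u * beta_density M l u)" for u
    by (simp add: power2_eq_square)
  also have "\<dots> u = real l / (real M + 1) * (u * beta_density (Suc M) (Suc l) u)" for u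
    unfolding mult_beta_density_Suc[OF assms(1)] by (rule mult.left_commute)
  also have "\<dots> u = c * beta_density (Suc (Suc M)) (Suc (Suc l)) u" for u
    by (simp add: mult_beta_density_Suc c_def add.commute)
  finally have "(\<lambda>u. u\<^sup>2 * beta_density M l u) = (\<lambda>u. c * beta_density (Suc (Suc M)) (Suc (Suc l)) u)"
    by auto
  moreover have "((\<lambda>u. c * beta_density (Suc (Suc M)) (Suc (Suc l)) u) has_integral c * 1) {0..1}"
    using assms by (intro has_integral_mult_right beta_density_has_integral_1) auto
  ultimately show ?thesis
    by (simp add: c_def)
qed

lemma beta_density_variance:
  assumes "1 \<le> l" "l \<le> M"
  shows "((\<lambda>u. (u - real l / (real M + 1))\<^sup>2 * beta_density M l u) has_integral
    real l * (real M + 1 - real l) / ((real M + 1)\<^sup>2 * (real M + 2))) {0..1}"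
proof -
  define t where "t = real l / (real M + 1)"
  have "((\<lambda>u. u\<^sup>2 * beta_density M l u - (2 * t) * (u * beta_density M l u) + t\<^sup>2 * beta_density M l u)
      has_integral t * ((real l + 1) / (real M + 2)) - (2 * t) * t + t\<^sup>2 * 1) {0..1}"
    unfolding t_def using assms
    by (intro has_integral_add has_integral_diff has_integral_mult_right beta_density_second_moment
        beta_density_mean beta_density_has_integral_1)
  moreover have "t * ((real l + 1) / (real M + 2)) - (2 * t) * t + t\<^sup>2 * 1
      = real l * (real M + 1 - real l) / ((real M + 1)\<^sup>2 * (real M + 2))"
    unfolding t_def by (simp add: divide_simps power2_eq_square) (simp add: algebra_simps)
  ultimately show ?thesis
    unfolding t_def[symmetric] by (simp add: power2_eq_square algebra_simps)
qed

lemma beta_variance_le: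
  "real l * (real M + 1 - real l) / ((real M + 1)\<^sup>2 * (real M + 2)) \<le> 1 / (4 * (real M + 2))"
proof -
  have "real l * (real M + 1 - real l) \<le> (real M + 1)\<^sup>2 / 4"
    using sum_squares_ge_zero[of "real M + 1 - 2 * real l" 0] by (simp add: power2_eq_square algebra_simps)
  then have "real l * (real M + 1 - real l) / (real M + 1)\<^sup>2 \<le> 1 / 4"
    by (simp add: divide_le_eq)
  then have "real l * (real M + 1 - real l) / (real M + 1)\<^sup>2 / (real M + 2) \<le> 1 / 4 / (real M + 2)"
    by (rule divide_right_mono) simp
  then show ?thesis
    by simp
qed

text \<open>The right-hand side is the tangent line at \<open>W\<close> of the concave map \<open>y \<mapsto> y powr (\<gamma>/2)\<close>,
  evaluated at \<open>y = x\<^sup>2\<close>.\<close>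

lemma abs_powr_le_tangent:
  fixes x W \<gamma> :: real
  assumes "0 < W" "0 < \<gamma>" "\<gamma> \<le> 2"
  shows "\<bar>x\<bar> powr \<gamma> \<le> W powr (\<gamma> / 2) * ((\<gamma> / 2) * x\<^sup>2 / W + (1 - \<gamma> / 2))"
proof (cases "x = 0")
  case True
  then show ?thesis using assms by simp
next
  case False
  define p where "p = \<gamma> / 2"
  have "\<bar>x\<bar> powr \<gamma> = (x\<^sup>2) powr p"
  proof -
    have "x\<^sup>2 = \<bar>x\<bar> powr 2"
      using False by (simp add: powr_numeral)
    then have "(x\<^sup>2) powr p = \<bar>x\<bar> powr (2 * p)"
      by (simp only: powr_powr)
    then show ?thesis
      by (simp add: p_def)
  qed
  also have "\<dots> = (x\<^sup>2) powr p * W powr (1 - p) * W powr p / W"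
    using assms by (simp add: mult.assoc flip: powr_add)
  also have "\<dots> \<le> (p * x\<^sup>2 + (1 - p) * W) * W powr p / W"
    using assms False
    by (intro divide_right_mono mult_right_mono Youngs_inequality_0) (auto simp: p_def)
  also have "\<dots> = W powr p * (p * x\<^sup>2 / W + (1 - p))"
    using assms by (simp add: field_simps)
  finally show ?thesis
    by (simp add: p_def)
qed

lemma abs_integral_le_central_moment_powr:
  fixes B R :: "real \<Rightarrow> real" and S :: "real set"
  assumes B_nonneg: "\<And>u. u \<in> S \<Longrightarrow> 0 \<le> B u" and B_mass: "(B has_integral 1) S"
    and B_var: "((\<lambda>u. (u - t)\<^sup>2 * B u) has_integral V) S" and "V \<le> W" "0 < W"
    and \<gamma>: "0 < \<gamma>" "\<gamma> \<le> 2" and "0 \<le> K"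
    and R_bound: "\<And>u. u \<in> S \<Longrightarrow> \<bar>R u\<bar> \<le> K * \<bar>u - t\<bar> powr \<gamma>"
    and BR: "(\<lambda>u. B u * R u) integrable_on S"
  shows "\<bar>integral S (\<lambda>u. B u * R u)\<bar> \<le> K * W powr (\<gamma> / 2)"
proof -
  define p where "p = \<gamma> / 2"
  define c where "c = K * W powr p"
  define g where "g u = c * (p / W) * ((u - t)\<^sup>2 * B u) + c * (1 - p) * B u" for u
  have g_int: "(g has_integral c * (p / W) * V + c * (1 - p) * 1) S"
    unfolding g_def by (intro has_integral_add has_integral_mult_right B_var B_mass)
  have "\<bar>integral S (\<lambda>u. B u * R u)\<bar> \<le> integral S g"
  proof -
    have "norm (B u * R u) \<le> g u" if u: "u \<in> S" for u
    proof -
      have "norm (B u * R u) = B u * \<bar>R u\<bar>"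
        using B_nonneg[OF u] by (simp add: abs_mult)
      also have "\<dots> \<le> B u * (K * (W powr p * (p * (u - t)\<^sup>2 / W + (1 - p))))"
      proof (rule mult_left_mono[OF _ B_nonneg[OF u]])
        show "\<bar>R u\<bar> \<le> K * (W powr p * (p * (u - t)\<^sup>2 / W + (1 - p)))"
          using R_bound[OF u] mult_left_mono[OF abs_powr_le_tangent[OF \<open>0 < W\<close> \<gamma>] \<open>0 \<le> K\<close>]
          unfolding p_def by (rule order.trans)
      qed
      also have "\<dots> = g u"
        by (simp add: g_def c_def algebra_simps)
      finally show ?thesis .
    qed
    then have "norm (integral S (\<lambda>u. B u * R u)) \<le> integral S g"
      using BR g_int by (intro integral_norm_bound_integral) auto
    then show ?thesis by simp
  qed
  also have "\<dots> = c * ((p / W) * V + (1 - p))"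
    using integral_unique[OF g_int] by (simp only: mult_1_right distrib_left mult.assoc)
  also have "\<dots> \<le> c * (p + (1 - p))"
  proof -
    have "(p / W) * V \<le> (p / W) * W"
      using \<open>V \<le> W\<close> \<open>0 < W\<close> \<gamma> by (intro mult_left_mono) (auto simp: p_def)
    then show ?thesis
      using \<open>0 < W\<close> \<open>0 \<le> K\<close> by (intro mult_left_mono) (auto simp: c_def)
  qed
  finally show ?thesis
    by (simp add: c_def p_def)
qed

lemma integrable_bernstein_monomial:
  fixes \<nu> :: "real measure"
  assumes "finite_measure \<nu>" "sets \<nu> = sets borel" "AE a in \<nu>. a \<in> {0..1}"
  shows "integrable \<nu> (\<lambda>a. a ^ k * (1 - a) ^ n)"
proof (rule finite_measure.integrable_const_bound[OF assms(1), where B = 1])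
  show "AE a in \<nu>. norm (a ^ k * (1 - a) ^ n) \<le> 1"
    using assms(3) by eventually_elim (auto intro!: mult_le_one power_le_one)
  show "(\<lambda>a. a ^ k * (1 - a) ^ n) \<in> borel_measurable \<nu>"
    unfolding measurable_cong_sets[OF assms(2) refl] by measurable
qed

lemma cdf_of_0:
  assumes "prob_space \<nu>" "sets \<nu> = sets borel" "measure \<nu> {0<..<1} = 1"
  shows "cdf_of \<nu> 0 = 0"
proof -
  interpret prob_space \<nu> by fact
  have "measure \<nu> {..0} \<le> measure \<nu> (space \<nu> - {0<..<1})"
    using assms(2) sets_eq_imp_space_eq[OF assms(2)] by (intro finite_measure_mono) auto
  also have "\<dots> = 0"
    using assms by (subst prob_compl) auto
  finally show ?thesis
    using measure_nonneg[of \<nu> "{..0}"] by (simp add: cdf_of_def)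
qed

lemma cdf_of_1:
  assumes "prob_space \<nu>" "sets \<nu> = sets borel" "measure \<nu> {0<..<1} = 1"
  shows "cdf_of \<nu> 1 = 1"
proof -
  interpret prob_space \<nu> by fact
  have "measure \<nu> {0<..<1} \<le> measure \<nu> {..1}"
    using assms(2) by (intro finite_measure_mono) auto
  then show ?thesis
    using assms(3) prob_le_1[of "{..1}"] by (simp add: cdf_of_def)
qed

lemma FM_at_1:
  assumes "prob_space \<nu>" "sets \<nu> = sets borel" "AE a in \<nu>. a \<in> {0..1}"
  shows "FM \<nu> M 1 = 1"
proof -
  interpret prob_space \<nu> by fact
  have "nat \<lfloor>(real M + 1) * 1\<rfloor> = Suc M"
    by simp
  then have "FM \<nu> M 1 = (\<Sum>k\<le>M. real (M choose k) * mom \<nu> k (M - k))"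
    by (simp only: FM_def lessThan_Suc_atMost)
  also have "\<dots> = (\<integral>a. (\<Sum>k\<le>M. real (M choose k) * (a ^ k * (1 - a) ^ (M - k))) \<partial>\<nu>)"
    using integrable_bernstein_monomial[OF finite_measure_axioms assms(2,3)]
    by (simp add: mom_def)
  also have "\<dots> = (\<integral>a. 1 \<partial>\<nu>)"
  proof (rule Bochner_Integration.integral_cong[OF refl])
    fix a :: real
    have "(\<Sum>k\<le>M. real (M choose k) * (a ^ k * (1 - a) ^ (M - k))) = (a + (1 - a)) ^ M"
      unfolding binomial_ring by (simp add: mult.assoc)
    then show "(\<Sum>k\<le>M. real (M choose k) * (a ^ k * (1 - a) ^ (M - k))) = 1"
      by simp
  qed
  also have "\<dots> = 1"
    by (simp add: prob_space)
  finally show ?thesis .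
qed

lemma nn_integral_tail_eq_integral_cdf:
  fixes \<nu> :: "real measure" and b G :: "real \<Rightarrow> real"
  assumes \<nu>: "finite_measure \<nu>" "sets \<nu> = sets borel" "AE a in \<nu>. a \<in> {0..1}"
    and b_meas: "b \<in> borel_measurable borel"
    and b_nonneg: "\<And>u. u \<in> {0..1} \<Longrightarrow> 0 \<le> b u"
    and b_tail: "\<And>a. a \<in> {0..1} \<Longrightarrow> (b has_integral G a) {a..1}"
    and bF_int: "((\<lambda>u. b u * cdf_of \<nu> u) has_integral I) {0..1}"
  shows "(\<integral>\<^sup>+a. ennreal (G a) \<partial>\<nu>) = ennreal I"
proof -
  interpret finite_measure \<nu> by fact
  define f where "f a u = ennreal (if 0 \<le> u \<and> u \<le> 1 \<and> a \<le> u then b u else 0)" for a u :: real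
  have "case_prod f \<in> borel_measurable (\<nu> \<Otimes>\<^sub>M lborel)"
  proof -
    have "sets (\<nu> \<Otimes>\<^sub>M lborel) = sets (borel \<Otimes>\<^sub>M (borel :: real measure))"
      using \<nu>(2) by (intro sets_pair_measure_cong) simp_all
    then have eq: "borel_measurable (\<nu> \<Otimes>\<^sub>M lborel)
        = borel_measurable (borel \<Otimes>\<^sub>M (borel :: real measure))"
      by (rule measurable_cong_sets) simp
    show ?thesis
      unfolding eq f_def using b_meas by measurable
  qed
  then have "(\<integral>\<^sup>+a. (\<integral>\<^sup>+u. f a u \<partial>lborel) \<partial>\<nu>) = (\<integral>\<^sup>+u. (\<integral>\<^sup>+a. f a u \<partial>\<nu>) \<partial>lborel)"
    by (intro pair_sigma_finite.Fubini'[symmetric])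
      (auto simp: pair_sigma_finite_def sigma_finite_measure_axioms lborel.sigma_finite_measure_axioms)
  moreover have "(\<integral>\<^sup>+a. (\<integral>\<^sup>+u. f a u \<partial>lborel) \<partial>\<nu>) = (\<integral>\<^sup>+a. ennreal (G a) \<partial>\<nu>)"
  proof (rule nn_integral_cong_AE)
    show "AE a in \<nu>. (\<integral>\<^sup>+u. f a u \<partial>lborel) = ennreal (G a)"
      using \<nu>(3)
    proof eventually_elim
      case (elim a)
      have "(\<integral>\<^sup>+u. f a u \<partial>lborel) = (\<integral>\<^sup>+u. ennreal (b u) * indicator {a..1} u \<partial>lborel)"
        using elim by (intro nn_integral_cong) (auto simp: f_def split: split_indicator)
      also have "\<dots> = ennreal (G a)"
        using elim b_nonneg by (intro nn_integral_has_integral_lebesgue' b_tail) auto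
      finally show ?case .
    qed
  qed
  moreover have "(\<integral>\<^sup>+u. (\<integral>\<^sup>+a. f a u \<partial>\<nu>) \<partial>lborel) = ennreal I"
  proof -
    have inner: "(\<integral>\<^sup>+a. f a u \<partial>\<nu>) = ennreal (b u * cdf_of \<nu> u) * indicator {0..1} u" for u
    proof (cases "u \<in> {0..1}")
      case True
      have "(\<integral>\<^sup>+a. f a u \<partial>\<nu>) = (\<integral>\<^sup>+a. ennreal (b u) * indicator {..u} a \<partial>\<nu>)"
        using True by (intro nn_integral_cong) (auto simp: f_def split: split_indicator)
      also have "\<dots> = ennreal (b u) * emeasure \<nu> {..u}"
        using \<nu>(2) by (intro nn_integral_cmult_indicator) simp
      finally show ?thesis
        using True b_nonneg by (simp add: emeasure_eq_measure cdf_of_def ennreal_mult)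
    qed (auto simp: f_def)
    have "(\<integral>\<^sup>+u. ennreal (b u * cdf_of \<nu> u) * indicator {0..1} u \<partial>lborel) = ennreal I"
      using b_nonneg by (intro nn_integral_has_integral_lebesgue' bF_int) (simp add: cdf_of_def)
    then show ?thesis
      by (simp add: inner)
  qed
  ultimately show ?thesis
    by simp
qed

lemma FM_eq_integral_beta_density_cdf:
  assumes \<nu>: "prob_space \<nu>" "sets \<nu> = sets borel" "AE a in \<nu>. a \<in> {0..1}"
    and l: "1 \<le> l" "l \<le> M" and F_cont: "continuous_on {0..1} (cdf_of \<nu>)"
  shows "FM \<nu> M (real l / (real M + 1)) = integral {0..1} (\<lambda>u. beta_density M l u * cdf_of \<nu> u)"
proof -
  interpret prob_space \<nu> by fact
  define I where "I = integral {0..1} (\<lambda>u. beta_density M l u * cdf_of \<nu> u)"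
  have monomial_int: "integrable \<nu> (\<lambda>a. a ^ k * (1 - a) ^ n)" for k n
    using integrable_bernstein_monomial[OF finite_measure_axioms \<nu>(2,3)] .
  have tail_nonneg: "AE a in \<nu>. 0 \<le> bernstein_tail M l a"
    using \<nu>(3) by eventually_elim (auto intro: bernstein_tail_nonneg)
  have "nat \<lfloor>(real M + 1) * (real l / (real M + 1))\<rfloor> = l"
    by simp
  then have "FM \<nu> M (real l / (real M + 1)) = (\<integral>a. bernstein_tail M l a \<partial>\<nu>)"
    by (simp add: FM_def bernstein_tail_def mom_def monomial_int)
  moreover have "ennreal (\<integral>a. bernstein_tail M l a \<partial>\<nu>) = ennreal I"
  proof -
    have "((\<lambda>u. beta_density M l u * cdf_of \<nu> u) has_integral I) {0..1}"
      unfolding I_def using F_cont continuous_on_beta_density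
      by (intro integrable_integral integrable_continuous_interval continuous_on_mult)
    then have "(\<integral>\<^sup>+a. ennreal (bernstein_tail M l a) \<partial>\<nu>) = ennreal I"
      using \<nu> l
      by (intro nn_integral_tail_eq_integral_cdf finite_measure_axioms)
        (auto intro!: beta_density_nonneg borel_measurable_continuous_onI continuous_on_beta_density
          beta_density_has_integral_bernstein_tail)
    moreover have "integrable \<nu> (bernstein_tail M l)"
      unfolding bernstein_tail_def
      by (intro Bochner_Integration.integrable_sum integrable_mult_right monomial_int)
    ultimately show ?thesis
      using tail_nonneg by (simp add: nn_integral_eq_integral)
  qed
  moreover have "0 \<le> I"
    unfolding I_def
    by (intro integral_nonneg mult_nonneg_nonneg beta_density_nonneg integrable_continuous_interval
        continuous_on_mult continuous_on_beta_density F_cont) (auto simp: cdf_of_def)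
  ultimately show ?thesis
    using integral_nonneg_AE[OF tail_nonneg] by (simp add: I_def)
qed

lemma cdf_minus_FM_interior_bound:
  fixes \<nu> :: "real measure"
  assumes \<nu>: "prob_space \<nu>" "sets \<nu> = sets borel" "AE a in \<nu>. a \<in> {0..1}"
    and l: "1 \<le> l" "l \<le> M" and \<gamma>: "0 < \<gamma>" "\<gamma> \<le> 2" and "0 \<le> K"
    and F_cont: "continuous_on {0..1} (cdf_of \<nu>)"
    and approx: "\<And>u. u \<in> {0..1} \<Longrightarrow>
      \<bar>cdf_of \<nu> u - cdf_of \<nu> t - c * (u - t)\<bar> \<le> K * \<bar>u - t\<bar> powr \<gamma>"
    and t: "t = real l / (real M + 1)"
  shows "\<bar>cdf_of \<nu> t - FM \<nu> M t\<bar> \<le> K * (1 / (4 * (real M + 2))) powr (\<gamma> / 2)"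
proof -
  define F where "F = cdf_of \<nu>"
  define R where "R u = F u - F t - c * (u - t)" for u
  have BF: "((\<lambda>u. beta_density M l u * F u) has_integral FM \<nu> M t) {0..1}"
    unfolding t F_def FM_eq_integral_beta_density_cdf[OF \<nu> l F_cont] using F_cont
    by (intro integrable_integral integrable_continuous_interval continuous_on_mult
        continuous_on_beta_density)
  have "((\<lambda>u. beta_density M l u * F u - F t * beta_density M l u
        - c * (u * beta_density M l u - t * beta_density M l u))
      has_integral FM \<nu> M t - F t * 1 - c * (t - t * 1)) {0..1}"
    unfolding t using l BF[unfolded t]
    by (intro has_integral_diff has_integral_mult_right beta_density_has_integral_1 beta_density_mean)
  then have BR: "((\<lambda>u. beta_density M l u * R u) has_integral FM \<nu> M t - F t) {0..1}"
    by (simp add: R_def algebra_simps)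
  have "\<bar>integral {0..1} (\<lambda>u. beta_density M l u * R u)\<bar>
      \<le> K * (1 / (4 * (real M + 2))) powr (\<gamma> / 2)"
  proof (rule abs_integral_le_central_moment_powr[OF _ _ _ beta_variance_le _ \<gamma> \<open>0 \<le> K\<close>])
    show "((\<lambda>u. (u - t)\<^sup>2 * beta_density M l u) has_integral
        real l * (real M + 1 - real l) / ((real M + 1)\<^sup>2 * (real M + 2))) {0..1}"
      unfolding t using l by (rule beta_density_variance)
  qed (use l BR approx in
      \<open>auto simp: R_def F_def beta_density_has_integral_1 beta_density_nonneg has_integral_integrable\<close>)
  then show ?thesis
    using integral_unique[OF BR] by (simp add: F_def abs_minus_commute)
qed

lemma cdf_minus_FM_grid_bound:
  fixes \<nu> :: "real measure"
  assumes \<nu>: "prob_space \<nu>" "sets \<nu> = sets borel" "measure \<nu> {0<..<1} = 1"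
    and \<gamma>: "0 < \<gamma>" "\<gamma> \<le> 2" and "0 \<le> K" and F_cont: "continuous_on {0..1} (cdf_of \<nu>)"
    and approx: "\<And>t. t \<in> {0..1} \<Longrightarrow>
      \<exists>c. \<forall>u\<in>{0..1}. \<bar>cdf_of \<nu> u - cdf_of \<nu> t - c * (u - t)\<bar> \<le> K * \<bar>u - t\<bar> powr \<gamma>"
    and "l \<le> M + 1"
  shows "\<bar>cdf_of \<nu> (real l / (real M + 1)) - FM \<nu> M (real l / (real M + 1))\<bar>
    \<le> K * (1 / (4 * (real M + 2))) powr (\<gamma> / 2)"
proof -
  define t where "t = real l / (real M + 1)"
  have AE: "AE a in \<nu>. a \<in> {0..1}"
    using prob_space.AE_prob_1[OF \<nu>(1,3)] by eventually_elim auto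
  consider "l = 0" | "l = M + 1" | "1 \<le> l \<and> l \<le> M"
    using \<open>l \<le> M + 1\<close> by linarith
  then have "\<bar>cdf_of \<nu> t - FM \<nu> M t\<bar> \<le> K * (1 / (4 * (real M + 2))) powr (\<gamma> / 2)"
  proof cases
    case 1
    then show ?thesis
      using cdf_of_0[OF \<nu>] \<open>0 \<le> K\<close> by (simp add: t_def FM_def)
  next
    case 2
    then have "t = 1"
      by (simp add: t_def)
    then show ?thesis
      using cdf_of_1[OF \<nu>] FM_at_1[OF \<nu>(1,2) AE] \<open>0 \<le> K\<close> by simp
  next
    case 3
    then obtain c where "\<forall>u\<in>{0..1}. \<bar>cdf_of \<nu> u - cdf_of \<nu> t - c * (u - t)\<bar> \<le> K * \<bar>u - t\<bar> powr \<gamma>"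
      using approx[of t] by (auto simp: t_def)
    then show ?thesis
      using 3 \<gamma> \<open>0 \<le> K\<close> F_cont
      by (intro cdf_minus_FM_interior_bound[OF \<nu>(1,2) AE, of l M]) (auto simp: t_def)
  qed
  then show ?thesis
    by (simp add: t_def)
qed

theorem lemma6p3:
  fixes \<nu> :: "real measure" and \<gamma> :: real and M :: nat
  assumes "prob_space \<nu>"
    and "sets \<nu> = sets borel"
    and "measure \<nu> {0<..<1} = 1"
    and "0 < \<gamma>" and "\<gamma> \<le> 2"
    and "holder_space \<gamma> (cdf_of \<nu>)"
  shows "\<forall>l::nat. l \<le> M + 1 \<longrightarrow>
     \<bar>cdf_of \<nu> (real l / (real M + 1)) - FM \<nu> M (real l / (real M + 1))\<bar>
       \<le> holder_norm \<gamma> (cdf_of \<nu>) / (2 powr \<gamma> * (real M + 2) powr (\<gamma> / 2))"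
proof (intro allI impI)
  fix l :: nat assume "l \<le> M + 1"
  obtain K where K: "0 \<le> K" "K \<le> holder_norm \<gamma> (cdf_of \<nu>)" and approx:
    "\<And>t. t \<in> {0..1} \<Longrightarrow>
      \<exists>c. \<forall>u\<in>{0..1}. \<bar>cdf_of \<nu> u - cdf_of \<nu> t - c * (u - t)\<bar> \<le> K * \<bar>u - t\<bar> powr \<gamma>"
    using holder_space_linear_approx[OF assms(6)] by blast
  have "(4::real) powr (\<gamma> / 2) = 2 powr \<gamma>"
    using powr_powr[of "2::real" 2 "\<gamma> / 2"] by simp
  then have "(1 / (4 * (real M + 2))) powr (\<gamma> / 2) = 1 / (2 powr \<gamma> * (real M + 2) powr (\<gamma> / 2))"
    by (simp only: powr_divide powr_one_eq_one powr_mult[of 4 "real M + 2"])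
  moreover have "\<bar>cdf_of \<nu> (real l / (real M + 1)) - FM \<nu> M (real l / (real M + 1))\<bar>
      \<le> K * (1 / (4 * (real M + 2))) powr (\<gamma> / 2)"
    using assms K approx holder_space_continuous[OF assms(6)] \<open>l \<le> M + 1\<close>
    by (intro cdf_minus_FM_grid_bound) auto
  ultimately show "\<bar>cdf_of \<nu> (real l / (real M + 1)) - FM \<nu> M (real l / (real M + 1))\<bar>
      \<le> holder_norm \<gamma> (cdf_of \<nu>) / (2 powr \<gamma> * (real M + 2) powr (\<gamma> / 2))"
    using K by (simp add: order.trans divide_right_mono)
qed

end
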